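(* Let $\mathbf{e}_0\in\mathbb{P}\mathrm{iez}$ with leading harmonic part $\mathbf{h}_0$ and $\mathbf{g}_0=\mathbf{e}_0-\mathbf{h}_0$. Then $$\min_{\mathbf{e}\in\overline{\Sigma}_{[\mathbb{O}^-]}}\|\mathbf{e}_0-\mathbf{e}\|^2=\|\mathbf{g}_0\|^2+\min_{\mathbf{h}\in\mathbb{H}^3(\mathbb{R}^3),\ \mathbf{d}_2'(\mathbf{h})=0}\|\mathbf{h}_0-\mathbf{h}\|^2,$$ and $\mathbf{e}$ is a minimizer of the left-hand problem if and only if $\mathbf{e}=\mathbf{h}$ with $\mathbf{h}$ a minimizer of $\|\mathbf{h}_0-\mathbf{h}\|^2$ over $\{\mathbf{h}\in\mathbb{H}^3(\mathbb{R}^3):\mathbf{d}_2'(\mathbf{h})=0\}$ (a 7-variable polynomial optimization problem).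
   Context: $\mathbb{P}\mathrm{iez}=\{\mathbf{e}\in\otimes^3\mathbb{R}^3: \mathrm{e}_{ijk}=\mathrm{e}_{ikj}\}$ with $\mathrm{O}(3)$-action $(g\cdot\mathbf{e})_{ijk}=g_{ia}g_{jb}g_{kc}\mathrm{e}_{abc}$ and norm $\|\mathbf{e}\|^2=\mathrm{e}_{ijk}\mathrm{e}_{ijk}$. $\mathbf{q}=(\delta_{ij})$. $(\mathbf{e}^s)_{ijk}=\frac13(\mathrm{e}_{ijk}+\mathrm{e}_{jik}+\mathrm{e}_{kji})$, $u_i=(\mathbf{e}^s)_{ikk}$, $(\mathbf{q}\odot\mathbf{u})_{ijk}=\frac13(\delta_{ij}u_k+\delta_{ik}u_j+\delta_{jk}u_i)$; the leading harmonic part of $\mathbf{e}$ is $\mathbf{h}=\mathbf{e}^s-\frac35\mathbf{q}\odot\mathbf{u}$. $\mathbb{H}^3(\mathbb{R}^3)$ is the 7-dimensional space of totally symmetric traceless third-order tensors. For $\mathbf{h}\in\mathbb{H}^3(\mathbb{R}^3)$: $(\mathbf{d}_2)_{ij}=h_{ikl}h_{klj}$, $\mathbf{d}_2'(\mathbf{h})=\mathbf{d}_2-\frac13\operatorname{tr}(\mathbf{d}_2)\mathbf{q}$. $\mathbb{O}^-\subset\mathrm{O}(3)$ is the group of orthogonal transformations preserving the regular tetrahedron with vertices $(1,1,1),(1,-1,-1),(-1,1,-1),(-1,-1,1)$. $\overline{\Sigma}_{[\mathbb{O}^-]}=\{\mathbf{e}\in\mathbb{P}\mathrm{iez}:\exists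 g\in\mathrm{O}(3),\ k\cdot\mathbf{e}=\mathbf{e}\ \forall k\in g\mathbb{O}^-g^{-1}\}$. *)

theory Defs
  imports "HOL-Analysis.Analysis"
begin

type_synonym tensor3 = "3 \<Rightarrow> 3 \<Rightarrow> 3 \<Rightarrow> real"
type_synonym tensor2 = "3 \<Rightarrow> 3 \<Rightarrow> real"

definition Piez :: "tensor3 set" where
  "Piez = {e. \<forall>i j k. e i j k = e i k j}"

definition tact :: "real^3^3 \<Rightarrow> tensor3 \<Rightarrow> tensor3" where
  "tact g e = (\<lambda>i j k. \<Sum>a\<in>UNIV. \<Sum>b\<in>UNIV. \<Sum>c\<in>UNIV.
      g$i$a * g$j$b * g$k$c * e a b c)"

definition tnorm2 :: "tensor3 \<Rightarrow> real" where
  "tnorm2 e = (\<Sum>i\<in>UNIV. \<Sum>j\<in>UNIV. \<Sum>k\<in>UNIV. (e i j k)^2)"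

definition kdelta :: "3 \<Rightarrow> 3 \<Rightarrow> real" where
  "kdelta i j = (if i = j then 1 else 0)"

definition tsym :: "tensor3 \<Rightarrow> tensor3" where
  "tsym e = (\<lambda>i j k. (e i j k + e j i k + e k j i) / 3)"

definition tvec_u :: "tensor3 \<Rightarrow> 3 \<Rightarrow> real" where
  "tvec_u e i = (\<Sum>k\<in>UNIV. tsym e i k k)"

definition qodot :: "(3 \<Rightarrow> real) \<Rightarrow> tensor3" where
  "qodot u = (\<lambda>i j k. (kdelta i j * u k + kdelta i k * u j + kdelta j k * u i) / 3)"

definition harm_part :: "tensor3 \<Rightarrow> tensor3" where
  "harm_part e = (\<lambda>i j k. tsym e i j k - 3/5 * qodot (tvec_u e) i j k)"

definition H3 :: "tensor3 set" where
  "H3 = {h. (\<forall>i j k. h i j k = h j i k \<and> h i j k = h i k j) \<and>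
            (\<forall>i. (\<Sum>k\<in>UNIV. h i k k) = 0)}"

definition d2 :: "tensor3 \<Rightarrow> tensor2" where
  "d2 h = (\<lambda>i j. \<Sum>k\<in>UNIV. \<Sum>l\<in>UNIV. h i k l * h k l j)"

definition d2' :: "tensor3 \<Rightarrow> tensor2" where
  "d2' h = (\<lambda>i j. d2 h i j - (\<Sum>k\<in>UNIV. d2 h k k) / 3 * kdelta i j)"

definition tetra_vertices :: "(real^3) set" where
  "tetra_vertices = {vector [1,1,1], vector [1,-1,-1], vector [-1,1,-1], vector [-1,-1,1]}"

definition Ominus :: "(real^3^3) set" where
  "Ominus = {k. orthogonal_matrix k \<and> (\<lambda>v. k *v v) ` tetra_vertices = tetra_vertices}"

definition Sigma_Ominus :: "tensor3 set" where
  "Sigma_Ominus = {e \<in> Piez. \<exists>g. orthogonal_matrix g \<and>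
      (\<forall>k\<in>Ominus. tact (g ** k ** transpose g) e = e)}"

end

theory Submission
  imports Defs
begin

text \<open>
  The harmonic part \<open>h\<^sub>0\<close> is the orthogonal projection of \<open>e\<^sub>0\<close> onto \<open>H3\<close>, so
  \<open>\<parallel>e\<^sub>0 - e\<parallel>\<^sup>2 = \<parallel>g\<^sub>0\<parallel>\<^sup>2 + \<parallel>h\<^sub>0 - e\<parallel>\<^sup>2\<close> for every harmonic \<open>e\<close>. Both problems are therefore the same
  once \<open>\<Sigma>[O\<^sup>-]\<close> is identified with \<open>{h \<in> H3. d\<^sub>2'(h) = 0}\<close>. A piezoelectricity tensor fixed by
  \<open>O\<^sup>-\<close> is a multiple of the tetrahedral tensor (sign changes kill every entry with a repeated
  index, the cyclic permutation equates the others), so \<open>\<Sigma>[O\<^sup>-]\<close> is the \<open>O(3)\<close>-orbit of these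
  multiples, and equivariance of \<open>d\<^sub>2\<close> puts it inside \<open>{d\<^sub>2' = 0}\<close>. Conversely, rotate a
  maximiser of the cubic form \<open>h(x,x,x)\<close> on the sphere to \<open>e\<^sub>3\<close>; the equations \<open>d\<^sub>2'(h) = 0\<close>
  then either make \<open>e\<^sub>3\<close> a null vector of \<open>x \<mapsto> h(x,x,\<cdot>)\<close> or produce such a null vector from
  a complex cube root, and with \<open>e\<^sub>3\<close> null \<open>h\<close> is a rotation about \<open>e\<^sub>3\<close> of a tetrahedral
  tensor. Minimisers exist because \<open>O(3)\<close> is compact.
\<close>

section \<open>The orthogonal action on third-order tensors\<close>

definition mode1 :: "real^3^3 \<Rightarrow> tensor3 \<Rightarrow> tensor3" where
  "mode1 g e = (\<lambda>i j k. \<Sum>a\<in>UNIV. g$i$a * e a j k)"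

definition mode2 :: "real^3^3 \<Rightarrow> tensor3 \<Rightarrow> tensor3" where
  "mode2 g e = (\<lambda>i j k. \<Sum>a\<in>UNIV. g$j$a * e i a k)"

definition mode3 :: "real^3^3 \<Rightarrow> tensor3 \<Rightarrow> tensor3" where
  "mode3 g e = (\<lambda>i j k. \<Sum>a\<in>UNIV. g$k$a * e i j a)"

lemma tact_eq_modes: "tact g e = mode1 g (mode2 g (mode3 g e))"
  unfolding tact_def mode1_def mode2_def mode3_def
  by (simp add: sum_distrib_left mult_ac)

lemma mode1_mult: "mode1 A (mode1 B e) = mode1 (A ** B) e"
  unfolding mode1_def matrix_matrix_mult_def
  by (intro ext) (simp add: sum_distrib_left sum_distrib_right mult_ac, rule sum.swap)

lemma mode2_mult: "mode2 A (mode2 B e) = mode2 (A ** B) e"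
  unfolding mode2_def matrix_matrix_mult_def
  by (intro ext) (simp add: sum_distrib_left sum_distrib_right mult_ac, rule sum.swap)

lemma mode3_mult: "mode3 A (mode3 B e) = mode3 (A ** B) e"
  unfolding mode3_def matrix_matrix_mult_def
  by (intro ext) (simp add: sum_distrib_left sum_distrib_right mult_ac, rule sum.swap)

lemma mode1_mode2_commute: "mode1 A (mode2 B e) = mode2 B (mode1 A e)"
  unfolding mode1_def mode2_def
  by (intro ext) (simp add: sum_distrib_left mult_ac, rule sum.swap)

lemma mode1_mode3_commute: "mode1 A (mode3 B e) = mode3 B (mode1 A e)"
  unfolding mode1_def mode3_def
  by (intro ext) (simp add: sum_distrib_left mult_ac, rule sum.swap)

lemma mode2_mode3_commute: "mode2 A (mode3 B e) = mode3 B (mode2 A e)"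
  unfolding mode2_def mode3_def
  by (intro ext) (simp add: sum_distrib_left mult_ac, rule sum.swap)

lemma tact_mult: "tact A (tact B e) = tact (A ** B) e"
  by (simp add: tact_eq_modes mode1_mult mode2_mult mode3_mult
      mode1_mode2_commute mode1_mode3_commute mode2_mode3_commute)

lemma sum_mat_1_mult: "(\<Sum>a\<in>UNIV. (mat 1 :: real^3^3)$i$a * f a) = f i"
  by (simp add: mat_def if_distrib[of "\<lambda>x. x * _"] cong: if_cong)

lemma tact_mat_1: "tact (mat 1) e = e"
  unfolding tact_def by (simp add: sum_mat_1_mult sum_distrib_left[symmetric] mult.assoc)

lemma tact_transpose_cancel:
  assumes "orthogonal_matrix g"
  shows "tact g (tact (transpose g) e) = e" "tact (transpose g) (tact g e) = e"
  using assms by (simp_all add: tact_mult tact_mat_1 orthogonal_matrix_def)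

lemma tact_scale: "tact g (\<lambda>i j k. c * e i j k) = (\<lambda>i j k. c * tact g e i j k)"
  unfolding tact_def by (simp add: sum_distrib_left mult_ac)

lemma orthogonal_matrix_col_sum:
  assumes "orthogonal_matrix g"
  shows "(\<Sum>k\<in>UNIV. g$k$a * g$k$b * c) = (if a = b then c else 0)"
proof -
  have "transpose g ** g = mat 1" using assms by (simp add: orthogonal_matrix_def)
  then have "(\<Sum>k\<in>UNIV. g$k$a * g$k$b) = (if a = b then 1 else 0)"
    by (auto simp: vec_eq_iff matrix_matrix_mult_def mat_def transpose_def)
  then show ?thesis by (simp add: sum_distrib_right[symmetric])
qed

lemma orthogonal_matrix_row_sum:
  "orthogonal_matrix g \<Longrightarrow> (\<Sum>k\<in>UNIV. g$a$k * g$b$k * c) = (if a = b then c else 0)"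
  using orthogonal_matrix_col_sum[OF orthogonal_matrix_transpose[THEN iffD2], of g a b c]
  by (simp add: transpose_def)

lemma sum_outer_to_inner_2:
  "(\<Sum>k\<in>U. \<Sum>a\<in>V. \<Sum>b\<in>W. F k a b) = (\<Sum>a\<in>V. \<Sum>b\<in>W. \<Sum>k\<in>U. F k a b)"
  by (rule trans[OF sum.swap], rule sum.cong[OF refl], rule sum.swap)

lemma sum_outer_to_inner_3:
  "(\<Sum>k\<in>U. \<Sum>a\<in>V. \<Sum>b\<in>W. \<Sum>c\<in>X. F k a b c) = (\<Sum>a\<in>V. \<Sum>b\<in>W. \<Sum>c\<in>X. \<Sum>k\<in>U. F k a b c)"
  by (rule trans[OF sum.swap], rule sum.cong[OF refl], rule sum_outer_to_inner_2)

lemma sum_swap_pairs: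
  "(\<Sum>k\<in>U. \<Sum>l\<in>V. \<Sum>a\<in>W. \<Sum>b\<in>X. F k l a b) = (\<Sum>a\<in>W. \<Sum>b\<in>X. \<Sum>k\<in>U. \<Sum>l\<in>V. F k l a b)"
  by (rule trans[OF sum.cong[OF refl sum_outer_to_inner_2]], rule sum_outer_to_inner_2)

lemma Piez_tact: "e \<in> Piez \<Longrightarrow> tact g e \<in> Piez"
  unfolding Piez_def tact_def
  by clarsimp (rule sum.cong[OF refl], subst (2) sum.swap, simp add: mult_ac)

lemma H3_tact:
  assumes g: "orthogonal_matrix g" and h: "h \<in> H3"
  shows "tact g h \<in> H3"
proof -
  have sym: "h a b c = h b a c" "h a b c = h a c b" for a b c using h by (auto simp: H3_def)
  have tr: "(\<Sum>b\<in>UNIV. h a b b) = 0" for a using h by (auto simp: H3_def)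
  have "tact g h i j k = tact g h j i k" for i j k
    unfolding tact_def
    by (subst (2) sum.swap, (rule sum.cong[OF refl])+) (use sym(1) in \<open>simp add: mult_ac\<close>)
  moreover have "tact g h i j k = tact g h i k j" for i j k
    unfolding tact_def
    by (rule sum.cong[OF refl], subst (2) sum.swap, (rule sum.cong[OF refl])+)
      (use sym(2) in \<open>simp add: mult_ac\<close>)
  moreover have "(\<Sum>k\<in>UNIV. tact g h i k k) = 0" for i
  proof -
    have "(\<Sum>k\<in>UNIV. tact g h i k k)
        = (\<Sum>a\<in>UNIV. \<Sum>b\<in>UNIV. \<Sum>c\<in>UNIV. \<Sum>k\<in>UNIV. g$k$b * g$k$c * (g$i$a * h a b c))"
      unfolding tact_def by (subst sum_outer_to_inner_3) (simp add: mult_ac)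
    also have "\<dots> = (\<Sum>a\<in>UNIV. g$i$a * (\<Sum>b\<in>UNIV. h a b b))"
      by (simp add: orthogonal_matrix_col_sum[OF g] sum_distrib_left)
    finally show ?thesis by (simp add: tr)
  qed
  ultimately show ?thesis by (auto simp: H3_def)
qed

definition gram2 :: "tensor3 \<Rightarrow> tensor2" where
  "gram2 e = (\<lambda>i j. \<Sum>k\<in>UNIV. \<Sum>l\<in>UNIV. e i k l * e j k l)"

lemma d2_eq_gram2: "h \<in> H3 \<Longrightarrow> d2 h = gram2 h"
  unfolding d2_def gram2_def H3_def by (auto intro!: ext sum.cong)

lemma gram2_mode1: "gram2 (mode1 g e) i j = (\<Sum>a\<in>UNIV. \<Sum>b\<in>UNIV. g$i$a * g$j$b * gram2 e a b)"
proof -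
  have "gram2 (mode1 g e) i j
      = (\<Sum>k\<in>UNIV. \<Sum>l\<in>UNIV. \<Sum>a\<in>UNIV. \<Sum>b\<in>UNIV. g$i$a * g$j$b * (e a k l * e b k l))"
    unfolding gram2_def mode1_def by (simp add: sum_product mult_ac)
  also have "\<dots> = (\<Sum>a\<in>UNIV. \<Sum>b\<in>UNIV. \<Sum>k\<in>UNIV. \<Sum>l\<in>UNIV. g$i$a * g$j$b * (e a k l * e b k l))"
    by (rule sum_swap_pairs)
  finally show ?thesis unfolding gram2_def by (simp add: sum_distrib_left)
qed

lemma gram2_mode2:
  assumes g: "orthogonal_matrix g" shows "gram2 (mode2 g e) = gram2 e"
proof (intro ext)
  fix i j
  have "gram2 (mode2 g e) i j
      = (\<Sum>k\<in>UNIV. \<Sum>l\<in>UNIV. \<Sum>a\<in>UNIV. \<Sum>b\<in>UNIV. g$k$a * g$k$b * (e i a l * e j b l))"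
    unfolding gram2_def mode2_def by (simp add: sum_product mult_ac)
  also have "\<dots> = (\<Sum>l\<in>UNIV. \<Sum>a\<in>UNIV. \<Sum>b\<in>UNIV. \<Sum>k\<in>UNIV. g$k$a * g$k$b * (e i a l * e j b l))"
    by (rule sum_outer_to_inner_3)
  also have "\<dots> = gram2 e i j"
    unfolding gram2_def by (simp add: orthogonal_matrix_col_sum[OF g], rule sum.swap)
  finally show "gram2 (mode2 g e) i j = gram2 e i j" .
qed

lemma gram2_mode3:
  assumes g: "orthogonal_matrix g" shows "gram2 (mode3 g e) = gram2 e"
proof (intro ext)
  fix i j
  have "gram2 (mode3 g e) i j
      = (\<Sum>k\<in>UNIV. \<Sum>l\<in>UNIV. \<Sum>a\<in>UNIV. \<Sum>b\<in>UNIV. g$l$a * g$l$b * (e i k a * e j k b))"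
    unfolding gram2_def mode3_def by (simp add: sum_product mult_ac)
  also have "\<dots> = (\<Sum>k\<in>UNIV. \<Sum>a\<in>UNIV. \<Sum>b\<in>UNIV. \<Sum>l\<in>UNIV. g$l$a * g$l$b * (e i k a * e j k b))"
    by (rule sum.cong[OF refl]) (rule sum_outer_to_inner_2)
  also have "\<dots> = gram2 e i j"
    unfolding gram2_def by (simp add: orthogonal_matrix_col_sum[OF g])
  finally show "gram2 (mode3 g e) i j = gram2 e i j" .
qed

lemma gram2_tact:
  "orthogonal_matrix g \<Longrightarrow> gram2 (tact g e) i j = (\<Sum>a\<in>UNIV. \<Sum>b\<in>UNIV. g$i$a * g$j$b * gram2 e a b)"
  by (simp add: tact_eq_modes gram2_mode1 gram2_mode2 gram2_mode3)

lemma tnorm2_eq_trace_gram2: "tnorm2 e = (\<Sum>i\<in>UNIV. gram2 e i i)"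
  unfolding tnorm2_def gram2_def by (simp add: power2_eq_square)

lemma tnorm2_tact:
  assumes g: "orthogonal_matrix g" shows "tnorm2 (tact g e) = tnorm2 e"
proof -
  have "tnorm2 (tact g e) = (\<Sum>i\<in>UNIV. \<Sum>a\<in>UNIV. \<Sum>b\<in>UNIV. g$i$a * g$i$b * gram2 e a b)"
    unfolding tnorm2_eq_trace_gram2 gram2_tact[OF g] ..
  also have "\<dots> = (\<Sum>a\<in>UNIV. \<Sum>b\<in>UNIV. \<Sum>i\<in>UNIV. g$i$a * g$i$b * gram2 e a b)"
    by (rule sum_outer_to_inner_2)
  also have "\<dots> = tnorm2 e"
    unfolding tnorm2_eq_trace_gram2 by (simp add: orthogonal_matrix_col_sum[OF g])
  finally show ?thesis .
qed

lemma d2'_eq_0_iff: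
  "d2' h = (\<lambda>i j. 0) \<longleftrightarrow> (\<forall>i j. d2 h i j = (\<Sum>k\<in>UNIV. d2 h k k) / 3 * kdelta i j)"
  unfolding d2'_def by (auto simp: fun_eq_iff)

lemma d2'_tact_eq_0:
  assumes g: "orthogonal_matrix g" and h: "h \<in> H3" and z: "d2' h = (\<lambda>i j. 0)"
  shows "d2' (tact g h) = (\<lambda>i j. 0)"
proof -
  define L where "L = (\<Sum>k\<in>UNIV. d2 h k k) / 3"
  have gram: "gram2 h a b = L * kdelta a b" for a b
    using z d2_eq_gram2[OF h] unfolding d2'_eq_0_iff L_def by metis
  have d2_tact: "d2 (tact g h) i j = L * kdelta i j" for i j
  proof -
    have "d2 (tact g h) i j = (\<Sum>a\<in>UNIV. \<Sum>b\<in>UNIV. g$i$a * g$j$b * (L * kdelta a b))"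
      unfolding d2_eq_gram2[OF H3_tact[OF g h]] gram2_tact[OF g] gram ..
    also have "\<dots> = (\<Sum>a\<in>UNIV. g$i$a * g$j$a * L)"
      by (simp add: kdelta_def if_distrib cong: if_cong)
    also have "\<dots> = L * kdelta i j"
      using orthogonal_matrix_row_sum[OF g, of i j L] by (simp add: kdelta_def mult_ac)
    finally show ?thesis .
  qed
  have "(\<Sum>k\<in>UNIV. d2 (tact g h) k k) = 3 * L" by (simp add: d2_tact sum_3 kdelta_def)
  then show ?thesis unfolding d2'_eq_0_iff using d2_tact by (simp add: sum_3 kdelta_def)
qed

section \<open>The tetrahedral tensor and the stratum \<open>\<Sigma>[O\<^sup>-]\<close>\<close>

definition tetra :: "real \<Rightarrow> tensor3" where
  "tetra c = (\<lambda>i j k. if i \<noteq> j \<and> j \<noteq> k \<and> i \<noteq> k then c else 0)"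

lemma tetra_eq_scale: "tetra c = (\<lambda>i j k. c * tetra 1 i j k)"
  unfolding tetra_def by (simp add: fun_eq_iff)

lemma tetra_H3: "tetra c \<in> H3"
  unfolding H3_def tetra_def by (simp add: forall_3 sum_3)

lemma d2_tetra: "d2 (tetra c) i j = 2 * c^2 * kdelta i j"
  using exhaust_3[of i] exhaust_3[of j]
  by (elim disjE) (simp_all add: d2_def tetra_def sum_3 kdelta_def power2_eq_square)

lemma d2'_tetra: "d2' (tetra c) = (\<lambda>i j. 0)"
  unfolding d2'_def by (simp add: d2_tetra sum_3 kdelta_def)

lemma tnorm2_tetra: "tnorm2 (tetra c) = 6 * c^2"
  unfolding tnorm2_def tetra_def by (simp add: sum_3)

lemma tetra_vertices_moment: "(\<lambda>i j k. \<Sum>v\<in>tetra_vertices. v$i * v$j * v$k) = tetra 4"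
proof (intro ext)
  fix i j k :: 3
  have distinct:
    "vector [1,1,1] \<noteq> (vector [1,-1,-1] :: real^3)" "vector [1,1,1] \<noteq> (vector [-1,1,-1] :: real^3)"
    "vector [1,1,1] \<noteq> (vector [-1,-1,1] :: real^3)" "vector [1,-1,-1] \<noteq> (vector [-1,1,-1] :: real^3)"
    "vector [1,-1,-1] \<noteq> (vector [-1,-1,1] :: real^3)" "vector [-1,1,-1] \<noteq> (vector [-1,-1,1] :: real^3)"
    by (auto simp: vec_eq_iff forall_3)
  show "(\<Sum>v\<in>tetra_vertices. v$i * v$j * v$k) = tetra 4 i j k"
    unfolding tetra_vertices_def using exhaust_3[of i] exhaust_3[of j] exhaust_3[of k]
    by (elim disjE) (simp_all add: distinct tetra_def)
qed

lemma tact_vertex_moment: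
  assumes k: "orthogonal_matrix k" and perm: "(\<lambda>v. k *v v) ` V = V"
  shows "tact k (\<lambda>i j l. \<Sum>v\<in>V. v$i * v$j * v$l) = (\<lambda>i j l. \<Sum>v\<in>V. v$i * v$j * v$l)"
proof (intro ext)
  fix i j l :: 3
  have inj: "inj_on (\<lambda>v. k *v v) V"
    using k unfolding inj_on_def orthogonal_matrix_def
    by (metis matrix_vector_mul_assoc matrix_vector_mul_lid)
  have "tact k (\<lambda>i j l. \<Sum>v\<in>V. v$i * v$j * v$l) i j l
      = (\<Sum>v\<in>V. (k *v v)$i * (k *v v)$j * (k *v v)$l)"
    unfolding tact_def matrix_vector_mult_def
    apply (simp add: sum_distrib_left sum_distrib_right sum.swap[of _ V] mult_ac)
    by (rule sum.cong[OF refl], rule trans[OF sum.swap]) (simp add: mult_ac)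
  also have "\<dots> = (\<Sum>w\<in>(\<lambda>v. k *v v) ` V. w$i * w$j * w$l)"
    by (simp add: sum.reindex[OF inj])
  finally show "tact k (\<lambda>i j l. \<Sum>v\<in>V. v$i * v$j * v$l) i j l = (\<Sum>v\<in>V. v$i * v$j * v$l)"
    unfolding perm .
qed

lemma tact_Ominus_tetra:
  assumes "k \<in> Ominus" shows "tact k (tetra c) = tetra c"
proof -
  have "tact k (tetra 4) = tetra 4"
    using tact_vertex_moment[of k tetra_vertices] assms
    unfolding tetra_vertices_moment by (simp add: Ominus_def)
  then have "tact k (tetra 1) = tetra 1"
    by (subst (asm) (1 2) tetra_eq_scale) (simp add: tact_scale fun_eq_iff)
  then show ?thesis
    by (subst (1 2) tetra_eq_scale) (simp add: tact_scale)
qed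

definition sign_diag :: "(3 \<Rightarrow> real) \<Rightarrow> real^3^3" where
  "sign_diag s = (\<chi> i a. if i = a then s i else 0)"

definition cyclic_perm :: "real^3^3" where
  "cyclic_perm = (\<chi> i a. if a = i + 1 then 1 else 0)"

lemma sum_sign_diag_mult: "(\<Sum>a\<in>UNIV. sign_diag s $ i $ a * F a) = s i * F i"
proof -
  have "(\<Sum>a\<in>UNIV. sign_diag s $ i $ a * F a) = (\<Sum>a\<in>UNIV. if i = a then s i * F a else 0)"
    by (rule sum.cong) (auto simp: sign_diag_def)
  then show ?thesis by simp
qed

lemma sum_cyclic_perm_mult: "(\<Sum>a\<in>UNIV. cyclic_perm $ i $ a * F a) = F (i + 1)"
proof -
  have "(\<Sum>a\<in>UNIV. cyclic_perm $ i $ a * F a) = (\<Sum>a\<in>UNIV. if i + 1 = a then F a else 0)"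
    by (rule sum.cong) (auto simp: cyclic_perm_def)
  then show ?thesis by simp
qed

lemma tact_sign_diag: "tact (sign_diag s) e i j k = s i * s j * s k * e i j k"
  unfolding tact_def by (simp add: sum_sign_diag_mult sum_distrib_left[symmetric] mult.assoc)

lemma tact_cyclic_perm: "tact cyclic_perm e i j k = e (i+1) (j+1) (k+1)"
  unfolding tact_def by (simp add: sum_cyclic_perm_mult sum_distrib_left[symmetric] mult.assoc)

lemma sign_diag_Ominus: "sign_diag (\<lambda>i. if i = j then 1 else -1) \<in> Ominus"
proof -
  have mult: "sign_diag s *v vector [x,y,z] = vector [s 1 * x, s 2 * y, s 3 * z]" for s x y z
    by (simp add: vec_eq_iff forall_3 matrix_vector_mult_def sum_3 sign_diag_def)
  have "orthogonal_matrix (sign_diag (\<lambda>i. if i = j then 1 else -1))"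
    unfolding orthogonal_matrix
    by (simp add: vec_eq_iff forall_3 matrix_matrix_mult_def transpose_def mat_def sum_3 sign_diag_def)
  then show ?thesis
    using exhaust_3[of j] unfolding Ominus_def tetra_vertices_def
    by (elim disjE) (auto simp: mult)
qed

lemma cyclic_perm_Ominus: "cyclic_perm \<in> Ominus"
proof -
  have mult: "cyclic_perm *v vector [x,y,z] = (vector [y,z,x] :: real^3)" for x y z
    by (simp add: vec_eq_iff forall_3 matrix_vector_mult_def sum_3 cyclic_perm_def)
  have "orthogonal_matrix cyclic_perm"
    unfolding orthogonal_matrix
    by (simp add: vec_eq_iff forall_3 matrix_matrix_mult_def transpose_def mat_def sum_3 cyclic_perm_def)
  then show ?thesis unfolding Ominus_def tetra_vertices_def by (auto simp: mult)
qed

lemma Ominus_invariant_eq_tetra: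
  assumes P: "e \<in> Piez" and inv: "\<forall>k\<in>Ominus. tact k e = e"
  shows "e = tetra (e 1 2 3)"
proof -
  define \<sigma> where "\<sigma> l i = (if i = l then 1 else - 1 :: real)" for l i :: 3
  have sign: "e i j k = 0" if "\<sigma> l i * \<sigma> l j * \<sigma> l k = -1" for i j k l
    using inv sign_diag_Ominus[of l] tact_sign_diag[of "\<sigma> l" e i j k] that
    unfolding \<sigma>_def[abs_def] by simp
  then have zero: "e i j k = 0"
    if "\<sigma> 1 i * \<sigma> 1 j * \<sigma> 1 k = -1 \<or> \<sigma> 2 i * \<sigma> 2 j * \<sigma> 2 k = -1" for i j k
    using that by blast
  have cyc: "e (i+1) (j+1) (k+1) = e i j k" for i j k
    using inv cyclic_perm_Ominus by (metis tact_cyclic_perm)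
  have four: "(4::3) = 1" by simp
  have c1: "e 2 3 1 = e 1 2 3" using cyc[of 1 2 3] by (simp add: four)
  have c2: "e 3 1 2 = e 1 2 3" using cyc[of 2 3 1] c1 by (simp add: four)
  have p: "e i j k = e i k j" for i j k using P by (auto simp: Piez_def)
  show ?thesis
  proof (intro ext)
    fix i j k :: 3
    show "e i j k = tetra (e 1 2 3) i j k"
      using exhaust_3[of i] exhaust_3[of j] exhaust_3[of k]
      by (elim disjE, simp_all add: tetra_def c1 c2 p[of 1 3 2] p[of 2 1 3] p[of 3 2 1])
        (rule zero, simp add: \<sigma>_def)+
  qed
qed

definition tetra_orbit :: "tensor3 set" where
  "tetra_orbit = {tact g (tetra c) | g c. orthogonal_matrix g}"

lemma tetra_orbit_tact: "orthogonal_matrix g \<Longrightarrow> h \<in> tetra_orbit \<Longrightarrow> tact g h \<in> tetra_orbit"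
  unfolding tetra_orbit_def using orthogonal_matrix_mul by (fastforce simp: tact_mult)

lemma tetra_orbit_subset_d2'_zero: "tetra_orbit \<subseteq> {h \<in> H3. d2' h = (\<lambda>i j. 0)}"
  unfolding tetra_orbit_def
  using H3_tact tetra_H3 d2'_tact_eq_0 d2'_tetra by blast

lemma Sigma_Ominus_subset_tetra_orbit: "Sigma_Ominus \<subseteq> tetra_orbit"
proof
  fix e assume "e \<in> Sigma_Ominus"
  then obtain g where P: "e \<in> Piez" and g: "orthogonal_matrix g"
    and inv: "\<forall>k\<in>Ominus. tact (g ** k ** transpose g) e = e"
    by (auto simp: Sigma_Ominus_def)
  define e' where "e' = tact (transpose g) e"
  have "tact k e' = e'" if k: "k \<in> Ominus" for k
  proof -
    have "tact k e' = tact (k ** transpose g) e" unfolding e'_def tact_mult ..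
    also have "k ** transpose g = transpose g ** (g ** k ** transpose g)"
      using g by (simp add: matrix_mul_assoc orthogonal_matrix_def)
    also have "tact \<dots> e = tact (transpose g) (tact (g ** k ** transpose g) e)"
      unfolding tact_mult ..
    finally show ?thesis using inv k unfolding e'_def by simp
  qed
  then have "e' = tetra (e' 1 2 3)"
    using Ominus_invariant_eq_tetra Piez_tact[OF P] unfolding e'_def by blast
  then have "e = tact g (tetra (e' 1 2 3))"
    using tact_transpose_cancel(1)[OF g, of e] unfolding e'_def by metis
  then show "e \<in> tetra_orbit" using g unfolding tetra_orbit_def by blast
qed

lemma tetra_orbit_subset_Sigma_Ominus: "tetra_orbit \<subseteq> Sigma_Ominus"
proof
  fix e assume e_orbit: "e \<in> tetra_orbit"
  then obtain g c where g: "orthogonal_matrix g" and e: "e = tact g (tetra c)"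
    unfolding tetra_orbit_def by blast
  have "e \<in> Piez"
    using e_orbit tetra_orbit_subset_d2'_zero by (auto simp: H3_def Piez_def)
  moreover have "tact (g ** k ** transpose g) e = e" if "k \<in> Ominus" for k
  proof -
    have "g ** k ** transpose g ** g = g ** k"
      using g by (simp add: matrix_mul_assoc[symmetric] orthogonal_matrix_def)
    then show ?thesis unfolding e tact_mult
      by (metis tact_mult tact_Ominus_tetra[OF that])
  qed
  ultimately show "e \<in> Sigma_Ominus" using g unfolding Sigma_Ominus_def by blast
qed

section \<open>Harmonic tensors with \<open>d\<^sub>2' = 0\<close> form the orbit of the tetrahedral tensor\<close>

lemma H3_sym_entries:
  assumes "h \<in> H3"
  shows "h 1 2 1 = h 1 1 2" "h 2 1 1 = h 1 1 2" "h 1 3 1 = h 1 1 3" "h 3 1 1 = h 1 1 3"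
    "h 2 1 2 = h 1 2 2" "h 2 2 1 = h 1 2 2" "h 1 3 2 = h 1 2 3" "h 2 1 3 = h 1 2 3"
    "h 2 3 1 = h 1 2 3" "h 3 1 2 = h 1 2 3" "h 3 2 1 = h 1 2 3" "h 3 1 3 = h 1 3 3"
    "h 3 3 1 = h 1 3 3" "h 2 3 2 = h 2 2 3" "h 3 2 2 = h 2 2 3" "h 3 2 3 = h 2 3 3" "h 3 3 2 = h 2 3 3"
  using assms unfolding H3_def by auto

lemma H3_trace_entries:
  assumes "h \<in> H3"
  shows "h 1 1 1 + h 1 2 2 + h 1 3 3 = 0" "h 1 1 2 + h 2 2 2 + h 2 3 3 = 0"
    "h 1 1 3 + h 2 2 3 + h 3 3 3 = 0"
proof -
  have tr: "(\<Sum>k\<in>UNIV. h i k k) = 0" for i using assms by (auto simp: H3_def)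
  show "h 1 1 1 + h 1 2 2 + h 1 3 3 = 0" using tr[of 1] by (simp add: sum_3)
  show "h 1 1 2 + h 2 2 2 + h 2 3 3 = 0" using tr[of 2] by (simp add: sum_3 H3_sym_entries[OF assms])
  show "h 1 1 3 + h 2 2 3 + h 3 3 3 = 0" using tr[of 3] by (simp add: sum_3 H3_sym_entries[OF assms])
qed

lemma d2'_zero_entries:
  assumes "d2' h = (\<lambda>i j. 0)"
  shows "d2 h 1 1 = d2 h 3 3" "d2 h 2 2 = d2 h 3 3" "d2 h 1 2 = 0" "d2 h 1 3 = 0" "d2 h 2 3 = 0"
proof -
  have e: "d2 h i j = (\<Sum>k\<in>UNIV. d2 h k k) / 3 * kdelta i j" for i j
    using assms unfolding d2'_eq_0_iff by blast
  show "d2 h 1 1 = d2 h 3 3" "d2 h 2 2 = d2 h 3 3"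
    using e[of 1 1] e[of 2 2] e[of 3 3] by (simp_all add: kdelta_def)
  show "d2 h 1 2 = 0" "d2 h 1 3 = 0" "d2 h 2 3 = 0"
    using e[of 1 2] e[of 1 3] e[of 2 3] by (simp_all add: kdelta_def)
qed

definition rot3 :: "real \<Rightarrow> real \<Rightarrow> real^3^3" where
  "rot3 u v = vector [vector [u,-v,0], vector [v,u,0], vector [0,0,1]]"

lemma orthogonal_matrix_rot3: "u^2 + v^2 = 1 \<Longrightarrow> orthogonal_matrix (rot3 u v)"
  unfolding orthogonal_matrix
  by (simp add: vec_eq_iff forall_3 matrix_matrix_mult_def transpose_def mat_def sum_3 rot3_def
      power2_eq_square algebra_simps)

lemma half_angle_param:
  fixes s t :: real
  obtains u v where "u^2 + v^2 = 1" "-2 * sqrt (s^2+t^2) * u * v = s" "sqrt (s^2+t^2) * (u^2 - v^2) = t"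
proof (cases "s = 0 \<and> t = 0")
  case True then show ?thesis using that[of 1 0] by simp
next
  case False
  define r where "r = sqrt (s^2+t^2)"
  have r0: "r > 0" using False unfolding r_def by (auto simp: add_pos_nonneg add_nonneg_pos)
  have rr: "r^2 = s^2 + t^2" unfolding r_def by simp
  have "s^2 + t^2 \<noteq> 0" using r0 rr by (metis power_not_zero less_irrefl)
  then have "(t/r)^2 + (-s/r)^2 = 1"
    by (simp add: power_divide rr add_divide_distrib[symmetric] add.commute)
  then obtain p where p: "t/r = cos p" "-s/r = sin p" by (rule sincos_total_2pi) auto
  have "-2 * r * cos (p/2) * sin (p/2) = s"
    using sin_double[of "p/2"] p(2) r0 by (simp add: field_simps)
  moreover have "r * ((cos (p/2))^2 - (sin (p/2))^2) = t"
  proof -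
    have "cos p = (cos (p/2))^2 - (sin (p/2))^2" using cos_double[of "p/2"] by simp
    moreover have "t = r * cos p" using p(1) r0 by (simp add: field_simps)
    ultimately show ?thesis by simp
  qed
  ultimately show ?thesis using that[of "cos (p/2)" "sin (p/2)"] unfolding r_def by simp
qed

text \<open>If \<open>e\<^sub>3\<close> is a null vector of the quadratic map \<open>x \<mapsto> h(x,x,\<cdot>)\<close>, the trace and \<open>d\<^sub>2'\<close>
  conditions leave only the two entries \<open>h\<^sub>1\<^sub>1\<^sub>3, h\<^sub>1\<^sub>2\<^sub>3\<close>, and a rotation about \<open>e\<^sub>3\<close> by the half angle
  of \<open>(h\<^sub>1\<^sub>2\<^sub>3, -h\<^sub>1\<^sub>1\<^sub>3)\<close> maps a multiple of the tetrahedral tensor onto \<open>h\<close>.\<close>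

lemma tetra_orbit_if_e3_null:
  assumes h: "h \<in> H3" and z: "d2' h = (\<lambda>i j. 0)"
    and null: "h 1 3 3 = 0" "h 2 3 3 = 0" "h 3 3 3 = 0"
  shows "h \<in> tetra_orbit"
proof -
  note sym = H3_sym_entries[OF h]
  note tr = H3_trace_entries[OF h]
  have "h 1 2 2 = - h 1 1 1" "h 1 1 2 = - h 2 2 2" "h 2 2 3 = - h 1 1 3" using tr null by linarith+
  moreover have "d2 h 1 1 = d2 h 3 3" using d2'_zero_entries[OF z] by simp
  ultimately have "2 * (h 1 1 1 * h 1 1 1) + 2 * (h 2 2 2 * h 2 2 2) = 0"
    by (simp add: d2_def sum_3 sym null)
  then have "h 1 1 1 * h 1 1 1 + h 2 2 2 * h 2 2 2 = 0" by linarith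
  then have diag: "h 1 1 1 = 0" "h 2 2 2 = 0" by (simp_all add: sum_squares_eq_zero_iff)
  obtain u v where uv: "u^2 + v^2 = 1" "-2 * sqrt ((h 1 1 3)^2 + (h 1 2 3)^2) * u * v = h 1 1 3"
    "sqrt ((h 1 1 3)^2 + (h 1 2 3)^2) * (u^2 - v^2) = h 1 2 3"
    by (rule half_angle_param)
  define c where "c = sqrt ((h 1 1 3)^2 + (h 1 2 3)^2)"
  have entries: "h 1 1 3 = -2 * c * u * v" "h 1 2 3 = c * (u^2 - v^2)" "h 2 2 3 = 2 * c * u * v"
    "h 1 2 2 = 0" "h 1 1 2 = 0" "h 1 1 1 = 0" "h 2 2 2 = 0"
    using uv tr null diag unfolding c_def by auto
  have "h = tact (rot3 u v) (tetra c)"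
  proof (intro ext)
    fix i j k :: 3
    show "h i j k = tact (rot3 u v) (tetra c) i j k"
      using exhaust_3[of i] exhaust_3[of j] exhaust_3[of k]
      by (elim disjE) (simp_all add: tact_def sum_3 tetra_def rot3_def sym null entries
          power2_eq_square algebra_simps)
  qed
  then show ?thesis unfolding tetra_orbit_def using orthogonal_matrix_rot3[OF uv(1)] by blast
qed

definition tensor_form :: "tensor3 \<Rightarrow> real^3 \<Rightarrow> real^3 \<Rightarrow> real^3 \<Rightarrow> real" where
  "tensor_form h x y z = (\<Sum>i\<in>UNIV. \<Sum>j\<in>UNIV. \<Sum>k\<in>UNIV. h i j k * x$i * y$j * z$k)"

lemma tensor_form_axis: "tensor_form h (axis i 1) (axis j 1) (axis k 1) = h i j k"
proof -
  have sum_axis: "(\<Sum>i\<in>UNIV. F i * (axis a 1 :: real^3)$i) = F a" for F a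
    by (simp add: axis_def if_distrib[of "\<lambda>x. _ * x"] cong: if_cong)
  show ?thesis unfolding tensor_form_def by (simp add: sum_axis sum_distrib_right[symmetric])
qed

lemma sum_swap_triples:
  "(\<Sum>i\<in>U. \<Sum>j\<in>U. \<Sum>k\<in>U. \<Sum>a\<in>V. \<Sum>b\<in>V. \<Sum>c\<in>V. F i j k a b c) =
   (\<Sum>a\<in>V. \<Sum>b\<in>V. \<Sum>c\<in>V. \<Sum>i\<in>U. \<Sum>j\<in>U. \<Sum>k\<in>U. F i j k a b c)"
proof -
  have "(\<Sum>i\<in>U. \<Sum>j\<in>U. \<Sum>k\<in>U. \<Sum>a\<in>V. \<Sum>b\<in>V. \<Sum>c\<in>V. F i j k a b c) =
     (\<Sum>i\<in>U. \<Sum>a\<in>V. \<Sum>b\<in>V. \<Sum>c\<in>V. \<Sum>j\<in>U. \<Sum>k\<in>U. F i j k a b c)"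
    by (intro sum.cong refl, rule trans[OF sum.cong[OF refl sum_outer_to_inner_3]])
      (rule sum_outer_to_inner_3)
  also have "\<dots> = (\<Sum>a\<in>V. \<Sum>b\<in>V. \<Sum>c\<in>V. \<Sum>i\<in>U. \<Sum>j\<in>U. \<Sum>k\<in>U. F i j k a b c)"
    by (rule sum_outer_to_inner_3)
  finally show ?thesis .
qed

lemma tensor_form_tact_transpose:
  "tensor_form (tact (transpose g) h) x y z = tensor_form h (g *v x) (g *v y) (g *v z)"
proof -
  have "tensor_form (tact (transpose g) h) x y z
      = (\<Sum>i\<in>UNIV. \<Sum>j\<in>UNIV. \<Sum>k\<in>UNIV. \<Sum>a\<in>UNIV. \<Sum>b\<in>UNIV. \<Sum>c\<in>UNIV.
           h a b c * (g$a$i * x$i) * (g$b$j * y$j) * (g$c$k * z$k))"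
    unfolding tensor_form_def tact_def transpose_def
    by (simp add: sum_distrib_left sum_distrib_right mult_ac)
  also have "\<dots> = (\<Sum>a\<in>UNIV. \<Sum>b\<in>UNIV. \<Sum>c\<in>UNIV. \<Sum>i\<in>UNIV. \<Sum>j\<in>UNIV. \<Sum>k\<in>UNIV.
           h a b c * (g$a$i * x$i) * (g$b$j * y$j) * (g$c$k * z$k))"
    by (rule sum_swap_triples)
  also have "\<dots> = tensor_form h (g *v x) (g *v y) (g *v z)"
    unfolding tensor_form_def matrix_vector_mult_def
    by (simp add: sum_distrib_left sum_distrib_right mult_ac)
  finally show ?thesis .
qed

lemma tensor_form_scaleR:
  "tensor_form h (a *\<^sub>R x) (b *\<^sub>R y) (c *\<^sub>R z) = a * b * c * tensor_form h x y z"
  unfolding tensor_form_def by (simp add: sum_distrib_left mult_ac)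

lemma tensor_form_null:
  assumes "\<forall>k. (\<Sum>i\<in>UNIV. \<Sum>j\<in>UNIV. h i j k * x$i * x$j) = 0"
  shows "tensor_form h x x z = 0"
proof -
  have "tensor_form h x x z = (\<Sum>k\<in>UNIV. \<Sum>i\<in>UNIV. \<Sum>j\<in>UNIV. h i j k * x$i * x$j * z$k)"
    unfolding tensor_form_def by (rule sum_outer_to_inner_2[symmetric])
  also have "\<dots> = (\<Sum>k\<in>UNIV. (\<Sum>i\<in>UNIV. \<Sum>j\<in>UNIV. h i j k * x$i * x$j) * z$k)"
    by (simp add: sum_distrib_right)
  finally show ?thesis using assms by simp
qed

lemma cubic_form_le_norm_cube:
  assumes "\<forall>y\<in>sphere 0 1. tensor_form h y y y \<le> \<mu>"
  shows "tensor_form h x x x \<le> \<mu> * norm x ^ 3"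
proof (cases "x = 0")
  case True then show ?thesis by (simp add: tensor_form_def)
next
  case False
  define u where "u = (1 / norm x) *\<^sub>R x"
  have "u \<in> sphere 0 1" using False unfolding u_def by (simp add: norm_scaleR)
  then have "norm x ^ 3 * tensor_form h u u u \<le> norm x ^ 3 * \<mu>"
    using assms by (simp add: mult_left_mono)
  moreover have "x = norm x *\<^sub>R u" using False unfolding u_def by simp
  then have "tensor_form h x x x = norm x ^ 3 * tensor_form h u u u"
    by (metis tensor_form_scaleR power3_eq_cube)
  ultimately show ?thesis by (simp add: mult.commute)
qed

lemma tensor_form_line:
  fixes t :: real
  assumes h: "h \<in> H3" and i: "i \<noteq> 3"
  defines "x \<equiv> axis 3 1 + t *\<^sub>R axis i 1"
  shows "tensor_form h x x x = h 3 3 3 + 3*t*h i 3 3 + 3*t^2*h i i 3 + t^3 * h i i i"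
    and "norm x ^ 2 = 1 + t^2"
proof -
  have i12: "i = 1 \<or> i = 2" using i exhaust_3[of i] by blast
  then show "tensor_form h x x x = h 3 3 3 + 3*t*h i 3 3 + 3*t^2*h i i 3 + t^3 * h i i i"
    unfolding x_def
    by (elim disjE) (simp_all add: tensor_form_def sum_3 axis_def H3_sym_entries[OF h]
        power2_eq_square power3_eq_cube algebra_simps)
  show "norm x ^ 2 = 1 + t^2"
    unfolding x_def power2_norm_eq_inner using i12
    by (elim disjE) (simp_all add: inner_vec_def sum_3 axis_def power2_eq_square algebra_simps)
qed

lemma local_max_derivative_zero:
  fixes A B C \<mu> :: real
  assumes "\<forall>t. 3*t*A + 3*t^2*B + t^3*C - \<mu>*(2*t^2+t^4) \<le> 0"
  shows "A = 0"
proof -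
  have "((\<lambda>t. 3*t*A + 3*t^2*B + t^3*C - \<mu>*(2*t^2+t^4)) has_real_derivative 3*A) (at 0)"
    by (rule derivative_eq_intros refl)+ simp
  then have "3*A = 0"
    by (rule DERIV_local_max[of _ _ _ 1]) (use assms in auto)
  then show ?thesis by simp
qed

text \<open>At a maximiser \<open>e\<^sub>3\<close> of the cubic form on the sphere, the derivative of the cubic form
  along the sphere vanishes; along the curve \<open>e\<^sub>3 + t e\<^sub>i\<close> this derivative is \<open>3 h\<^sub>i\<^sub>3\<^sub>3\<close>.\<close>

lemma max_direction_entries_zero:
  assumes h: "h \<in> H3" and max: "\<forall>x. tensor_form h x x x \<le> h 3 3 3 * norm x ^ 3" and i: "i \<noteq> 3"
  shows "h i 3 3 = 0"
proof -
  have "tensor_form h (-axis 3 1) (-axis 3 1) (-axis 3 1) = - h 3 3 3"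
    using tensor_form_scaleR[of h "-1" "axis 3 1" "-1" "axis 3 1" "-1" "axis 3 1"]
    by (simp add: tensor_form_axis)
  then have \<mu>: "h 3 3 3 \<ge> 0" using max[rule_format, of "-axis 3 1"] by simp
  show ?thesis
  proof (rule local_max_derivative_zero[of _ "h i i 3" "h i i i" "h 3 3 3"], intro allI)
    fix t :: real
    define x :: "real^3" where "x = axis 3 1 + t *\<^sub>R axis i 1"
    have n2: "norm x ^ 2 = 1 + t^2" using tensor_form_line(2)[OF h i, of t] unfolding x_def .
    then have n: "norm x \<ge> 1" "norm x ^ 2 = 1 + t^2" by (auto intro: power2_le_imp_le)
    have "norm x ^ 3 \<le> norm x ^ 3 * norm x" using n by (simp add: mult_le_cancel_left1)
    also have "\<dots> = 1 + (2*t^2 + t^4)" using n by (simp add: power2_eq_square power3_eq_cube power4_eq_xxxx algebra_simps)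
    finally have "h 3 3 3 * norm x ^ 3 \<le> h 3 3 3 * (1 + (2*t^2 + t^4))" using \<mu> by (rule mult_left_mono)
    then show "3*t*h i 3 3 + 3*t^2*h i i 3 + t^3*h i i i - h 3 3 3 * (2*t^2+t^4) \<le> 0"
      using max[rule_format, of x] tensor_form_line(1)[OF h i, of t] unfolding x_def
      by (simp add: algebra_simps)
  qed
qed

lemma exists_rotation_to_max_direction:
  assumes h: "h \<in> H3"
  obtains g where "orthogonal_matrix g"
    "tact (transpose g) h 1 3 3 = 0" "tact (transpose g) h 2 3 3 = 0"
proof -
  have cont: "continuous_on (sphere 0 1) (\<lambda>x. tensor_form h x x x)"
    unfolding tensor_form_def by (intro continuous_intros)
  obtain n where n: "n \<in> sphere (0::real^3) 1"
    and nmax: "\<forall>y\<in>sphere 0 1. tensor_form h y y y \<le> tensor_form h n n n"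
    using continuous_attains_sup[OF compact_sphere _ cont] by (auto simp: sphere_eq_empty)
  obtain g where g: "orthogonal_matrix g" "g *v axis 3 1 = n"
    using orthogonal_matrix_exists_basis[of n] n by auto
  define h' where "h' = tact (transpose g) h"
  have h': "h' \<in> H3" unfolding h'_def using g(1) by (intro H3_tact h) simp
  have "h' 3 3 3 = tensor_form h n n n"
    using tensor_form_axis[of h' 3 3 3] unfolding h'_def tensor_form_tact_transpose g(2) by simp
  moreover have "tensor_form h' x x x \<le> tensor_form h n n n * norm x ^ 3" for x
    using cubic_form_le_norm_cube[OF nmax, of "g *v x"] orthogonal_transformation_matrix[of "\<lambda>x. g *v x"] g(1)
    unfolding h'_def tensor_form_tact_transpose by (simp add: orthogonal_transformation_norm)
  ultimately have "\<forall>x. tensor_form h' x x x \<le> h' 3 3 3 * norm x ^ 3" by simp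
  then show ?thesis using that[OF g(1)] max_direction_entries_zero[OF h'] unfolding h'_def by simp
qed

lemma complex_cube_root: "\<exists>z::complex. z^3 = w"
proof -
  have "rcis (root 3 (cmod w)) (Arg w / 3) ^ 3 = rcis (root 3 (cmod w) ^ 3) (real 3 * (Arg w / 3))"
    by (rule DeMoivre2)
  also have "\<dots> = w" by (simp add: rcis_cmod_Arg)
  finally show ?thesis by blast
qed

lemma d2'_zero_normal_form:
  assumes h: "h \<in> H3" and z: "d2' h = (\<lambda>i j. 0)"
    and e3: "h 1 3 3 = 0" "h 2 3 3 = 0" "h 3 3 3 = \<mu>" "\<mu> \<noteq> 0"
  shows "h 1 2 3 = 0" "h 1 1 3 = -\<mu>/2" "(h 1 1 1)^2 + (h 2 2 2)^2 = \<mu>^2/2"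
proof -
  note sym = H3_sym_entries[OF h]
  note E = d2'_zero_entries[OF z]
  have tr: "h 1 2 2 = - h 1 1 1" "h 1 1 2 = - h 2 2 2" "h 2 2 3 = - \<mu> - h 1 1 3"
    using H3_trace_entries[OF h] e3 by linarith+
  have "d2 h 1 2 = -2 * h 1 2 3 * \<mu>"
    by (simp add: d2_def sum_3 sym e3 tr algebra_simps)
  then show t: "h 1 2 3 = 0" using E(3) e3(4) by simp
  have "d2 h 1 1 = 2*(h 1 1 1)^2 + 2*(h 2 2 2)^2 + 2*(h 1 1 3)^2"
    "d2 h 2 2 = 2*(h 1 1 1)^2 + 2*(h 2 2 2)^2 + 2*(\<mu> + h 1 1 3)^2"
    "d2 h 3 3 = (h 1 1 3)^2 + (\<mu> + h 1 1 3)^2 + \<mu>^2"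
    by (simp_all add: d2_def sum_3 sym e3 tr t power2_eq_square algebra_simps)
  moreover from this have "\<mu> * (\<mu> + 2 * h 1 1 3) = 0"
    using E(1,2) by (simp add: power2_eq_square algebra_simps)
  then show s: "h 1 1 3 = -\<mu>/2" using e3(4) by simp
  ultimately show "(h 1 1 1)^2 + (h 2 2 2)^2 = \<mu>^2/2"
    using E(1) s by (simp add: power2_eq_square field_simps)
qed

text \<open>The entries \<open>a = h\<^sub>1\<^sub>1\<^sub>1, b = h\<^sub>2\<^sub>2\<^sub>2\<close> are matched by the cubic \<open>\<mu>/4 \<cdot> z\<^sup>3\<close> with \<open>|z|\<^sup>2 = 2\<close>,
  where \<open>z\<^sup>3 = 4(a - i b)/\<mu>\<close>.\<close>

lemma cubic_param:
  fixes a b \<mu> :: real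
  assumes ab: "a^2 + b^2 = \<mu>^2/2" and \<mu>: "\<mu> \<noteq> 0"
  obtains x1 x2 where "x1^2 + x2^2 = 2"
    "a = \<mu> * (x1^3 - 3*x1*x2^2) / 4" "b = - \<mu> * (3*x1^2*x2 - x2^3) / 4"
proof -
  obtain z :: complex where z: "z^3 = Complex (4*a/\<mu>) (-4*b/\<mu>)" using complex_cube_root by blast
  define x1 where "x1 = Re z"
  define x2 where "x2 = Im z"
  have "Re (z^3) = x1^3 - 3*x1*x2^2" "Im (z^3) = 3*x1^2*x2 - x2^3"
    unfolding x1_def x2_def by (simp_all add: power3_eq_cube power2_eq_square algebra_simps)
  then have re: "x1^3 - 3*x1*x2^2 = 4*a/\<mu>" and im: "3*x1^2*x2 - x2^3 = -4*b/\<mu>"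
    using z by simp_all
  have "(x1^2+x2^2)^3 = (x1^3 - 3*x1*x2^2)^2 + (3*x1^2*x2 - x2^3)^2"
    by (simp add: power2_eq_square power3_eq_cube algebra_simps)
  also have "\<dots> = 16 * (a^2+b^2) / \<mu>^2"
    unfolding re im by (simp add: power_divide add_divide_distrib algebra_simps)
  also have "\<dots> = 2^3" using ab \<mu> by (simp add: field_simps)
  finally have "x1^2 + x2^2 = 2"
    using power_eq_imp_eq_base[of "x1^2 + x2^2" 3 2] by simp
  moreover have "a = \<mu> * (x1^3 - 3*x1*x2^2) / 4" "b = - \<mu> * (3*x1^2*x2 - x2^3) / 4"
    using re im \<mu> by (simp_all add: field_simps)
  ultimately show ?thesis using that by blast
qed

lemma exists_null_vector:
  assumes h: "h \<in> H3" and z: "d2' h = (\<lambda>i j. 0)"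
    and e3: "h 1 3 3 = 0" "h 2 3 3 = 0" "h 3 3 3 \<noteq> 0"
  obtains y :: "real^3" where "y \<noteq> 0" "\<forall>k. (\<Sum>i\<in>UNIV. \<Sum>j\<in>UNIV. h i j k * y$i * y$j) = 0"
proof -
  define \<mu> where "\<mu> = h 3 3 3"
  note normal = d2'_zero_normal_form[OF h z e3(1,2) \<mu>_def[symmetric] e3(3)[folded \<mu>_def]]
  obtain x1 x2 where r: "x1^2 + x2^2 = 2"
    and a: "h 1 1 1 = \<mu> * (x1^3 - 3*x1*x2^2) / 4" and b: "h 2 2 2 = - \<mu> * (3*x1^2*x2 - x2^3) / 4"
    using cubic_param[OF normal(3)] e3(3) unfolding \<mu>_def by blast
  have tr: "h 1 2 2 = - h 1 1 1" "h 1 1 2 = - h 2 2 2" "h 2 2 3 = - \<mu> - h 1 1 3"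
    using H3_trace_entries[OF h] e3 unfolding \<mu>_def by linarith+
  define y :: "real^3" where "y = vector [x1, x2, 1]"
  have "y \<noteq> 0" unfolding y_def by (metis vector_3(3) zero_index zero_neq_one)
  moreover have "(\<Sum>i\<in>UNIV. \<Sum>j\<in>UNIV. h i j k * y$i * y$j) = 0" for k
  proof -
    have "h 1 1 1*(x1^2-x2^2) - 2*h 2 2 2*x1*x2 - \<mu>*x1 = \<mu>/4 * x1 * ((x1^2+x2^2)^2 - 4)"
      "-h 2 2 2*(x1^2-x2^2) - 2*h 1 1 1*x1*x2 - \<mu>*x2 = \<mu>/4 * x2 * ((x1^2+x2^2)^2 - 4)"
      unfolding a b by (simp_all add: power2_eq_square power3_eq_cube field_simps)
    then have "h 1 1 1*(x1^2-x2^2) - 2*h 2 2 2*x1*x2 - \<mu>*x1 = 0"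
      "-h 2 2 2*(x1^2-x2^2) - 2*h 1 1 1*x1*x2 - \<mu>*x2 = 0" "-\<mu>/2 * (x1^2+x2^2) + \<mu> = 0"
      using r by simp_all
    then show ?thesis
      using exhaust_3[of k] \<mu>_def
      by (elim disjE) (simp_all add: y_def sum_3 H3_sym_entries[OF h] e3 tr normal(1,2)
          power2_eq_square algebra_simps)
  qed
  ultimately show ?thesis using that by blast
qed

lemma exists_rotation_to_null_vector:
  assumes "y \<noteq> 0" and null: "\<forall>k. (\<Sum>i\<in>UNIV. \<Sum>j\<in>UNIV. h i j k * y$i * y$j) = 0"
  obtains g where "orthogonal_matrix g" "\<forall>k. tact (transpose g) h 3 3 k = 0"
proof -
  define m where "m = (1 / norm y) *\<^sub>R y"
  have "norm m = 1" using assms(1) unfolding m_def by (simp add: norm_scaleR)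
  then obtain g where g: "orthogonal_matrix g" "g *v axis 3 1 = m"
    using orthogonal_matrix_exists_basis by metis
  have "tact (transpose g) h 3 3 k = 0" for k
  proof -
    have "tact (transpose g) h 3 3 k = tensor_form h m m (g *v axis k 1)"
      using tensor_form_axis[of "tact (transpose g) h" 3 3 k]
      unfolding tensor_form_tact_transpose g(2) by simp
    also have "\<dots> = (1 / norm y) * (1 / norm y) * 1 * tensor_form h y y (g *v axis k 1)"
      unfolding m_def using tensor_form_scaleR[of h _ y _ y 1] by simp
    finally show ?thesis using tensor_form_null[OF null] by simp
  qed
  then show ?thesis using that g(1) by blast
qed

lemma d2'_zero_subset_tetra_orbit: "{h \<in> H3. d2' h = (\<lambda>i j. 0)} \<subseteq> tetra_orbit"
proof
  fix h assume "h \<in> {h \<in> H3. d2' h = (\<lambda>i j. 0)}"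
  then have h: "h \<in> H3" and z: "d2' h = (\<lambda>i j. 0)" by auto
  have null_case: "h' \<in> tetra_orbit"
    if hyps: "h' \<in> H3" "d2' h' = (\<lambda>i j. 0)" "h' 1 3 3 = 0" "h' 2 3 3 = 0" for h'
  proof (cases "h' 3 3 3 = 0")
    case True then show ?thesis using tetra_orbit_if_e3_null hyps by blast
  next
    case False
    obtain y where "y \<noteq> 0" "\<forall>k. (\<Sum>i\<in>UNIV. \<Sum>j\<in>UNIV. h' i j k * y$i * y$j) = 0"
      using exists_null_vector[OF hyps False] by blast
    then obtain g where g: "orthogonal_matrix g" and g0: "\<forall>k. tact (transpose g) h' 3 3 k = 0"
      by (rule exists_rotation_to_null_vector)
    have gt: "orthogonal_matrix (transpose g)" using g by simp
    have "tact (transpose g) h' \<in> tetra_orbit"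
      using tetra_orbit_if_e3_null[OF H3_tact[OF gt hyps(1)] d2'_tact_eq_0[OF gt hyps(1,2)]] g0
        H3_sym_entries[OF H3_tact[OF gt hyps(1)]] by simp
    then show ?thesis using tetra_orbit_tact[OF g] tact_transpose_cancel(1)[OF g] by metis
  qed
  obtain g where g: "orthogonal_matrix g"
    and e3: "tact (transpose g) h 1 3 3 = 0" "tact (transpose g) h 2 3 3 = 0"
    using exists_rotation_to_max_direction[OF h] by blast
  have gt: "orthogonal_matrix (transpose g)" using g by simp
  have "tact (transpose g) h \<in> tetra_orbit"
    using null_case[OF H3_tact[OF gt h] d2'_tact_eq_0[OF gt h z] e3] .
  then show "h \<in> tetra_orbit" using tetra_orbit_tact[OF g] tact_transpose_cancel(1)[OF g] by metis
qed

lemma tetra_orbit_eq_d2'_zero: "tetra_orbit = {h \<in> H3. d2' h = (\<lambda>i j. 0)}"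
  using tetra_orbit_subset_d2'_zero d2'_zero_subset_tetra_orbit by (rule subset_antisym)

lemma Sigma_Ominus_eq_d2'_zero: "Sigma_Ominus = {h \<in> H3. d2' h = (\<lambda>i j. 0)}"
  using Sigma_Ominus_subset_tetra_orbit tetra_orbit_subset_Sigma_Ominus tetra_orbit_eq_d2'_zero
  by blast

section \<open>Harmonic projection and the nearest point of the stratum\<close>

definition tinner :: "tensor3 \<Rightarrow> tensor3 \<Rightarrow> real" where
  "tinner a b = (\<Sum>i\<in>UNIV. \<Sum>j\<in>UNIV. \<Sum>k\<in>UNIV. a i j k * b i j k)"

lemma tnorm2_add: "tnorm2 (\<lambda>i j k. a i j k + b i j k) = tnorm2 a + tnorm2 b + 2 * tinner a b"
  unfolding tnorm2_def tinner_def
  by (simp add: power2_sum sum.distrib sum_distrib_left algebra_simps)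

lemma tnorm2_diff_scale:
  "tnorm2 (\<lambda>i j k. a i j k - c * b i j k) = tnorm2 a - 2 * c * tinner a b + c^2 * tnorm2 b"
  unfolding tnorm2_def tinner_def
  by (simp add: power2_diff sum_subtractf sum.distrib sum_distrib_left power_mult_distrib algebra_simps)

lemma tinner_tsym_H3:
  assumes e: "e \<in> Piez" and s: "s \<in> H3"
  shows "tinner (tsym e) s = tinner e s"
proof -
  have "e 1 2 1 = e 1 1 2" "e 1 3 1 = e 1 1 3" "e 1 3 2 = e 1 2 3"
    "e 2 2 1 = e 2 1 2" "e 2 3 1 = e 2 1 3" "e 2 3 2 = e 2 2 3"
    "e 3 2 1 = e 3 1 2" "e 3 3 1 = e 3 1 3" "e 3 3 2 = e 3 2 3"
    using e unfolding Piez_def by auto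
  then show ?thesis
    unfolding tinner_def tsym_def by (simp add: sum_3 H3_sym_entries[OF s] field_simps)
qed

lemma tinner_qodot_H3:
  assumes s: "s \<in> H3" shows "tinner (qodot u) s = 0"
proof -
  have diag: "s 1 1 1 = - s 1 2 2 - s 1 3 3" "s 2 2 2 = - s 1 1 2 - s 2 3 3"
    "s 3 3 3 = - s 1 1 3 - s 2 2 3"
    using H3_trace_entries[OF s] by linarith+
  show ?thesis
    unfolding tinner_def qodot_def kdelta_def by (simp add: sum_3 H3_sym_entries[OF s] diag field_simps)
qed

lemma harm_part_residual_orthogonal_H3:
  assumes e: "e \<in> Piez" and s: "s \<in> H3"
  shows "tinner (e - harm_part e) s = 0"
proof -
  have "tinner (e - harm_part e) s
      = tinner e s - tinner (tsym e) s + 3/5 * tinner (qodot (tvec_u e)) s"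
    unfolding tinner_def harm_part_def
    by (simp add: sum_subtractf sum.distrib sum_distrib_left algebra_simps)
  then show ?thesis using tinner_tsym_H3[OF e s] tinner_qodot_H3[OF s] by simp
qed

lemma harm_part_H3:
  assumes e: "e \<in> Piez" shows "harm_part e \<in> H3"
proof -
  have p: "e i j k = e i k j" for i j k using e by (auto simp: Piez_def)
  have kdelta_sym: "kdelta i j = kdelta j i" for i j unfolding kdelta_def by auto
  have "harm_part e i j k = harm_part e j i k" for i j k
    unfolding harm_part_def tsym_def qodot_def
    by (simp add: kdelta_sym[of j i] p[of k i j] algebra_simps)
  moreover have "harm_part e i j k = harm_part e i k j" for i j k
    unfolding harm_part_def tsym_def qodot_def
    by (simp add: kdelta_sym[of k j] p[of i k j] p[of k i j] p[of j k i] algebra_simps)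
  moreover have "(\<Sum>k\<in>UNIV. harm_part e i k k) = 0" for i
    using exhaust_3[of i]
    by (elim disjE) (simp_all add: harm_part_def tsym_def qodot_def kdelta_def tvec_u_def sum_3 field_simps)
  ultimately show ?thesis by (auto simp: H3_def)
qed

lemma tnorm2_harm_decomp:
  assumes e0: "e0 \<in> Piez" and e: "e \<in> H3"
  shows "tnorm2 (e0 - e) = tnorm2 (e0 - harm_part e0) + tnorm2 (harm_part e0 - e)"
proof -
  have "harm_part e0 - e \<in> H3"
    using harm_part_H3[OF e0] e unfolding H3_def by (auto simp: sum_subtractf)
  then have "tinner (e0 - harm_part e0) (harm_part e0 - e) = 0"
    by (rule harm_part_residual_orthogonal_H3[OF e0])
  moreover have "e0 - e = (\<lambda>i j k. (e0 - harm_part e0) i j k + (harm_part e0 - e) i j k)"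
    by (simp add: fun_eq_iff)
  then have "tnorm2 (e0 - e) = tnorm2 (e0 - harm_part e0) + tnorm2 (harm_part e0 - e)
      + 2 * tinner (e0 - harm_part e0) (harm_part e0 - e)"
    by (simp only: tnorm2_add)
  ultimately show ?thesis by simp
qed

lemma compact_orthogonal_matrices: "compact {g :: real^3^3. orthogonal_matrix g}"
proof (subst compact_eq_bounded_closed, intro conjI)
  show "bounded {g :: real^3^3. orthogonal_matrix g}"
  proof (rule boundedI)
    fix g :: "real^3^3" assume "g \<in> {g. orthogonal_matrix g}"
    then have "norm (g $ i) = 1" for i
      by (simp add: orthogonal_matrix_orthonormal_rows row_def vec_lambda_eta)
    then have "(\<Sum>i\<in>UNIV. norm (g$i)) = 3" by simp
    moreover have "norm g \<le> (\<Sum>i\<in>UNIV. norm (g$i))" unfolding norm_vec_def by (rule L2_set_le_sum) simp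
    ultimately show "norm g \<le> 3" by simp
  qed
  have "{g :: real^3^3. orthogonal_matrix g}
      = {g. \<forall>a b. (\<Sum>k\<in>UNIV. g$k$a * g$k$b) = (if a = b then 1 else 0)}"
    by (auto simp: orthogonal_matrix vec_eq_iff matrix_matrix_mult_def transpose_def mat_def)
  then show "closed {g :: real^3^3. orthogonal_matrix g}"
    by (simp only:) (intro closed_Collect_all closed_Collect_eq continuous_intros)
qed

text \<open>Over the orbit, \<open>\<parallel>a - g\<cdot>tetra c\<parallel>\<^sup>2 = \<parallel>a\<parallel>\<^sup>2 - 2c\<langle>a, g\<cdot>tetra 1\<rangle> + 6c\<^sup>2\<close>; the optimal scale is
  \<open>c = \<langle>a, g\<cdot>tetra 1\<rangle>/6\<close>, so a nearest point comes from a maximiser of \<open>\<langle>a, g\<cdot>tetra 1\<rangle>\<^sup>2\<close>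
  over the compact group \<open>O(3)\<close>.\<close>

lemma tetra_orbit_nearest_exists:
  obtains h where "h \<in> tetra_orbit" "\<forall>h'\<in>tetra_orbit. tnorm2 (a - h) \<le> tnorm2 (a - h')"
proof -
  let ?O = "{g :: real^3^3. orthogonal_matrix g}"
  let ?\<phi> = "\<lambda>g. (tinner a (tact g (tetra 1)))^2"
  have cont: "continuous_on ?O ?\<phi>" unfolding tinner_def tact_def by (intro continuous_intros)
  obtain gs where gs: "orthogonal_matrix gs" and gmax: "\<forall>g. orthogonal_matrix g \<longrightarrow> ?\<phi> g \<le> ?\<phi> gs"
    using continuous_attains_sup[OF compact_orthogonal_matrices _ cont] orthogonal_matrix_id by auto
  have dist: "tnorm2 (a - tact g (tetra c)) = tnorm2 a - 2 * c * tinner a (tact g (tetra 1)) + 6 * c^2"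
    if g: "orthogonal_matrix g" for g c
  proof -
    have "a - tact g (tetra c) = (\<lambda>i j k. a i j k - c * tact g (tetra 1) i j k)"
      by (subst tetra_eq_scale) (simp add: tact_scale fun_eq_iff)
    then show ?thesis by (simp add: tnorm2_diff_scale tnorm2_tact[OF g] tnorm2_tetra)
  qed
  define ts where "ts = tinner a (tact gs (tetra 1))"
  have "tnorm2 (a - tact gs (tetra (ts / 6))) \<le> tnorm2 (a - h')" if h': "h' \<in> tetra_orbit" for h'
  proof -
    obtain g c where g: "orthogonal_matrix g" and h'_eq: "h' = tact g (tetra c)"
      using h' unfolding tetra_orbit_def by blast
    define t where "t = tinner a (tact g (tetra 1))"
    have "t^2 \<le> ts^2" using gmax g unfolding t_def ts_def by blast
    moreover have "0 \<le> (6*c - t)^2" by simp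
    ultimately have "0 \<le> 6 * c^2 - 2 * c * t + ts^2 / 6"
      by (simp add: power2_eq_square algebra_simps)
    then show ?thesis unfolding h'_eq dist[OF gs] dist[OF g] ts_def[symmetric] t_def[symmetric]
      by (simp add: power2_eq_square)
  qed
  then show ?thesis using that gs unfolding tetra_orbit_def by blast
qed

theorem theorem7p2:
  fixes e0 :: tensor3
  assumes "e0 \<in> Piez"
  defines "h0 \<equiv> harm_part e0"
  defines "g0 \<equiv> e0 - h0"
  defines "T \<equiv> {h \<in> H3. d2' h = (\<lambda>i j. 0)}"
  shows "(\<exists>e\<in>Sigma_Ominus. \<forall>e'\<in>Sigma_Ominus. tnorm2 (e0 - e) \<le> tnorm2 (e0 - e'))
       \<and> (\<exists>h\<in>T. \<forall>h'\<in>T. tnorm2 (h0 - h) \<le> tnorm2 (h0 - h'))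
       \<and> (INF e\<in>Sigma_Ominus. tnorm2 (e0 - e)) = tnorm2 g0 + (INF h\<in>T. tnorm2 (h0 - h))
       \<and> (\<forall>e. (e \<in> Sigma_Ominus \<and> (\<forall>e'\<in>Sigma_Ominus. tnorm2 (e0 - e) \<le> tnorm2 (e0 - e')))
              \<longleftrightarrow> (e \<in> T \<and> (\<forall>h'\<in>T. tnorm2 (h0 - e) \<le> tnorm2 (h0 - h'))))"
proof -
  have ST: "Sigma_Ominus = T" and OT: "tetra_orbit = T"
    unfolding T_def by (rule Sigma_Ominus_eq_d2'_zero tetra_orbit_eq_d2'_zero)+
  have dec: "tnorm2 (e0 - e) = tnorm2 g0 + tnorm2 (h0 - e)" if "e \<in> T" for e
    using tnorm2_harm_decomp[OF assms(1)] that unfolding T_def g0_def h0_def by simp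
  obtain hs where hs: "hs \<in> T" and hmin: "\<forall>h'\<in>T. tnorm2 (h0 - hs) \<le> tnorm2 (h0 - h')"
    using tetra_orbit_nearest_exists[of h0] unfolding OT by blast
  have emin: "\<forall>e'\<in>T. tnorm2 (e0 - hs) \<le> tnorm2 (e0 - e')" using hmin dec hs by simp
  have "(INF e\<in>T. tnorm2 (e0 - e)) = tnorm2 (e0 - hs)"
    by (rule cInf_eq_minimum) (use hs emin in auto)
  moreover have "(INF h\<in>T. tnorm2 (h0 - h)) = tnorm2 (h0 - hs)"
    by (rule cInf_eq_minimum) (use hs hmin in auto)
  ultimately have inf: "(INF e\<in>T. tnorm2 (e0 - e)) = tnorm2 g0 + (INF h\<in>T. tnorm2 (h0 - h))"
    using dec[OF hs] by simp
  have "(\<forall>e'\<in>T. tnorm2 (e0 - e) \<le> tnorm2 (e0 - e'))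
      \<longleftrightarrow> (\<forall>h'\<in>T. tnorm2 (h0 - e) \<le> tnorm2 (h0 - h'))" if "e \<in> T" for e
    using dec that by auto
  then show ?thesis unfolding ST using hs hmin emin inf by blast
qed

end
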